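(* Let $k\ge 0$. If $\mathcal{M}$ is a matroid whose base configuration $V_{\mathcal{M}}$ has Theta rank at most $k$, then every minor $\mathcal{N}$ of $\mathcal{M}$ has base configuration of Theta rank at most $k$. Likewise, if $V_{\mathcal{M}}$ has levelness at most $k$, then so does $V_{\mathcal{N}}$ for every minor $\mathcal{N}$ of $\mathcal{M}$.
   Context: For a matroid $\mathcal{M}=(E,\mathcal{B})$ with set of bases $\mathcal{B}$, the base configuration is $V_{\mathcal{M}}=\{\mathbf{1}_B:B\in\mathcal{B}\}\subset\mathbb{R}^E$ ($\mathbf{1}_B$ the characteristic vector). Minors are obtained by sequences of deletions and contractions (deleting a coloop $e$ gives bases $\{B\setminus e\}$; contracting a loop is defined dually). A point configuration is a finite set $V\subset\mathbb{R}^n$; a linear function means an affine function. A linear function $\ell$ nonnegative on $V$ is $k$-sos with respect to $V$ if $\ell(v)=\sum_i h_i(v)^2$ for all $v\in V$ for some polynomials $h_i$ of degree $\le k$. The Theta rank of $V$ is the smallest $k\ge 0$ such that every linear function nonnegative on $V$ is $k$-sos. For $\ell$ nonnegative on $V$, $\{v\in V:\ell(v)=0\}$ is a face; inclusion-maximal faces different from $V$ are facets and the corresponding $\ell$ facet-defining. The levelness of $V$ is the smallest $k$ such that every facet-defining linear function takes at most $k$ distinct values on $V$. *)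

theory Defs
  imports Main "HOL-Library.Indicator_Function"
begin

definition matroid :: "'a set \<Rightarrow> 'a set set \<Rightarrow> bool" where
  "matroid E \<B> \<longleftrightarrow> finite E \<and> \<B> \<noteq> {} \<and> (\<forall>B\<in>\<B>. B \<subseteq> E) \<and>
     (\<forall>B1\<in>\<B>. \<forall>B2\<in>\<B>. \<forall>x\<in>B1 - B2. \<exists>y\<in>B2 - B1. insert y (B1 - {x}) \<in> \<B>)"

definition delete_bases :: "'a set set \<Rightarrow> 'a \<Rightarrow> 'a set set" where
  "delete_bases \<B> e =
     (if (\<forall>B\<in>\<B>. e \<in> B) then (\<lambda>B. B - {e}) ` \<B> else {B\<in>\<B>. e \<notin> B})"

definition contract_bases :: "'a set set \<Rightarrow> 'a \<Rightarrow> 'a set set" where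
  "contract_bases \<B> e =
     (if (\<forall>B\<in>\<B>. e \<notin> B) then \<B> else (\<lambda>B. B - {e}) ` {B\<in>\<B>. e \<in> B})"

inductive is_minor :: "'a set \<Rightarrow> 'a set set \<Rightarrow> 'a set \<Rightarrow> 'a set set \<Rightarrow> bool" where
  refl: "is_minor E \<B> E \<B>"
| del: "is_minor E \<B> E' \<B>' \<Longrightarrow> e \<in> E' \<Longrightarrow>
          is_minor E \<B> (E' - {e}) (delete_bases \<B>' e)"
| con: "is_minor E \<B> E' \<B>' \<Longrightarrow> e \<in> E' \<Longrightarrow>
          is_minor E \<B> (E' - {e}) (contract_bases \<B>' e)"

text \<open>Points of R^E are represented as functions 'a \<Rightarrow> real; only the
coordinates in E matter for the functions below.\<close>

definition base_config :: "'a set set \<Rightarrow> ('a \<Rightarrow> real) set" where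
  "base_config \<B> = (\<lambda>B. indicator B) ` \<B>"

definition affine_fun :: "'a set \<Rightarrow> (('a \<Rightarrow> real) \<Rightarrow> real) \<Rightarrow> bool" where
  "affine_fun E l \<longleftrightarrow> (\<exists>c a. \<forall>x. l x = c + (\<Sum>e\<in>E. a e * x e))"

definition poly_fun :: "'a set \<Rightarrow> nat \<Rightarrow> (('a \<Rightarrow> real) \<Rightarrow> real) \<Rightarrow> bool" where
  "poly_fun E k f \<longleftrightarrow> (\<exists>M c. finite M \<and>
      (\<forall>\<alpha>\<in>M. (\<forall>e. e \<notin> E \<longrightarrow> \<alpha> e = 0) \<and> (\<Sum>e\<in>E. \<alpha> e) \<le> k) \<and>
      (\<forall>x. f x = (\<Sum>\<alpha>\<in>M. c \<alpha> * (\<Prod>e\<in>E. x e ^ \<alpha> e))))"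

definition nonneg_on :: "('a \<Rightarrow> real) set \<Rightarrow> (('a \<Rightarrow> real) \<Rightarrow> real) \<Rightarrow> bool" where
  "nonneg_on V l \<longleftrightarrow> (\<forall>v\<in>V. 0 \<le> l v)"

definition k_sos :: "'a set \<Rightarrow> nat \<Rightarrow> ('a \<Rightarrow> real) set \<Rightarrow> (('a \<Rightarrow> real) \<Rightarrow> real) \<Rightarrow> bool" where
  "k_sos E k V l \<longleftrightarrow> (\<exists>hs. (\<forall>h\<in>set hs. poly_fun E k h) \<and>
      (\<forall>v\<in>V. l v = (\<Sum>h\<leftarrow>hs. (h v)\<^sup>2)))"

definition theta_rank :: "'a set \<Rightarrow> ('a \<Rightarrow> real) set \<Rightarrow> nat" where
  "theta_rank E V = (LEAST k. \<forall>l. affine_fun E l \<and> nonneg_on V l \<longrightarrow> k_sos E k V l)"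

definition face :: "'a set \<Rightarrow> ('a \<Rightarrow> real) set \<Rightarrow> ('a \<Rightarrow> real) set \<Rightarrow> bool" where
  "face E V F \<longleftrightarrow> (\<exists>l. affine_fun E l \<and> nonneg_on V l \<and> F = {v\<in>V. l v = 0})"

definition facet :: "'a set \<Rightarrow> ('a \<Rightarrow> real) set \<Rightarrow> ('a \<Rightarrow> real) set \<Rightarrow> bool" where
  "facet E V F \<longleftrightarrow> face E V F \<and> F \<noteq> V \<and>
      (\<forall>G. face E V G \<and> G \<noteq> V \<and> F \<subseteq> G \<longrightarrow> G = F)"

definition facet_defining :: "'a set \<Rightarrow> ('a \<Rightarrow> real) set \<Rightarrow> (('a \<Rightarrow> real) \<Rightarrow> real) \<Rightarrow> bool" where
  "facet_defining E V l \<longleftrightarrow> affine_fun E l \<and> nonneg_on V l \<and> facet E V {v\<in>V. l v = 0}"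

definition levelness :: "'a set \<Rightarrow> ('a \<Rightarrow> real) set \<Rightarrow> nat" where
  "levelness E V = (LEAST k. \<forall>l. facet_defining E V l \<longrightarrow> card (l ` V) \<le> k)"

end

theory Submission
  imports Defs
begin

text \<open>Deleting or contracting an element e replaces the base configuration V by its
face on which the coordinate e is constant (0 or 1), followed by the projection that
forgets e; the projection transports affine functions, polynomials of bounded degree
and faces back and forth. It therefore suffices that both invariants pass from V to
its faces F = {f = 0}. An affine function nonnegative on F becomes nonnegative on V
after adding a large multiple of f, without changing on F; so sums of squares on V
restrict to F. Every facet Z of F is the trace G \<inter> F of a facet G of V (take a
maximal face of V with trace Z), and an affine function defining G agrees on F with
a positive multiple of one defining Z, so it takes on V at least as many values.
Both invariants are finite (the square root of a nonnegative function on 0/1 points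
is interpolated by a multilinear polynomial of degree at most |E|), so the LEAST in
their definitions is attained.\<close>

lemma poly_fun_monomial:
  assumes "\<forall>d. d \<notin> E \<longrightarrow> \<alpha> d = 0" "(\<Sum>d\<in>E. \<alpha> d) \<le> k"
  shows "poly_fun E k (\<lambda>x. a * (\<Prod>d\<in>E. x d ^ \<alpha> d))"
  unfolding poly_fun_def
  by (rule exI[of _ "{\<alpha>}"], rule exI[of _ "\<lambda>_. a"]) (use assms in auto)

lemma poly_fun_zero: "poly_fun E k (\<lambda>x. 0)"
  unfolding poly_fun_def by (rule exI[of _ "{}"]) auto

lemma poly_fun_const: "poly_fun E k (\<lambda>x. a)"
  using poly_fun_monomial[of E "\<lambda>_. 0" k a] by simp

lemma poly_fun_mono: "poly_fun E k f \<Longrightarrow> k \<le> k' \<Longrightarrow> poly_fun E k' f"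
  unfolding poly_fun_def by (meson order_trans)

lemma poly_fun_add:
  assumes "poly_fun E k f" "poly_fun E k g"
  shows "poly_fun E k (\<lambda>x. f x + g x)"
proof -
  obtain M1 c1 where m1: "finite M1" "\<forall>\<alpha>\<in>M1. (\<forall>e. e \<notin> E \<longrightarrow> \<alpha> e = 0) \<and> (\<Sum>e\<in>E. \<alpha> e) \<le> k"
    "\<forall>x. f x = (\<Sum>\<alpha>\<in>M1. c1 \<alpha> * (\<Prod>e\<in>E. x e ^ \<alpha> e))"
    using assms(1) unfolding poly_fun_def by blast
  obtain M2 c2 where m2: "finite M2" "\<forall>\<alpha>\<in>M2. (\<forall>e. e \<notin> E \<longrightarrow> \<alpha> e = 0) \<and> (\<Sum>e\<in>E. \<alpha> e) \<le> k"
    "\<forall>x. g x = (\<Sum>\<alpha>\<in>M2. c2 \<alpha> * (\<Prod>e\<in>E. x e ^ \<alpha> e))"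
    using assms(2) unfolding poly_fun_def by blast
  define c where "c \<alpha> = (if \<alpha> \<in> M1 then c1 \<alpha> else 0) + (if \<alpha> \<in> M2 then c2 \<alpha> else 0)" for \<alpha>
  have "f x + g x = (\<Sum>\<alpha>\<in>M1 \<union> M2. c \<alpha> * (\<Prod>e\<in>E. x e ^ \<alpha> e))" for x
  proof -
    have s1: "(\<Sum>\<alpha>\<in>M1 \<union> M2. (if \<alpha> \<in> M1 then c1 \<alpha> else 0) * (\<Prod>e\<in>E. x e ^ \<alpha> e))
        = (\<Sum>\<alpha>\<in>M1. c1 \<alpha> * (\<Prod>e\<in>E. x e ^ \<alpha> e))"
      by (rule sum.mono_neutral_cong_right) (use m1 m2 in auto)
    have s2: "(\<Sum>\<alpha>\<in>M1 \<union> M2. (if \<alpha> \<in> M2 then c2 \<alpha> else 0) * (\<Prod>e\<in>E. x e ^ \<alpha> e))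
        = (\<Sum>\<alpha>\<in>M2. c2 \<alpha> * (\<Prod>e\<in>E. x e ^ \<alpha> e))"
      by (rule sum.mono_neutral_cong_right) (use m1 m2 in auto)
    show ?thesis unfolding c_def distrib_right sum.distrib s1 s2 using m1 m2 by simp
  qed
  then show ?thesis unfolding poly_fun_def using m1 m2
    by (intro exI[of _ "M1 \<union> M2"] exI[of _ c]) auto
qed

lemma poly_fun_sum:
  assumes "finite S" "\<forall>i\<in>S. poly_fun E k (f i)"
  shows "poly_fun E k (\<lambda>x. \<Sum>i\<in>S. f i x)"
  using assms
proof (induction S rule: finite_induct)
  case empty
  then show ?case using poly_fun_zero by simp
next
  case (insert i S)
  then show ?case using poly_fun_add[of E k "f i" "\<lambda>x. \<Sum>i\<in>S. f i x"] by simp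
qed

lemma poly_fun_mult:
  assumes "poly_fun E a f" "poly_fun E b g"
  shows "poly_fun E (a + b) (\<lambda>x. f x * g x)"
proof -
  obtain M1 c1 where m1: "finite M1" "\<forall>\<alpha>\<in>M1. (\<forall>e. e \<notin> E \<longrightarrow> \<alpha> e = 0) \<and> (\<Sum>e\<in>E. \<alpha> e) \<le> a"
    "\<forall>x. f x = (\<Sum>\<alpha>\<in>M1. c1 \<alpha> * (\<Prod>e\<in>E. x e ^ \<alpha> e))"
    using assms(1) unfolding poly_fun_def by blast
  obtain M2 c2 where m2: "finite M2" "\<forall>\<alpha>\<in>M2. (\<forall>e. e \<notin> E \<longrightarrow> \<alpha> e = 0) \<and> (\<Sum>e\<in>E. \<alpha> e) \<le> b"
    "\<forall>x. g x = (\<Sum>\<alpha>\<in>M2. c2 \<alpha> * (\<Prod>e\<in>E. x e ^ \<alpha> e))"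
    using assms(2) unfolding poly_fun_def by blast
  have expand: "f x * g x = (\<Sum>\<alpha>\<in>M1. \<Sum>\<beta>\<in>M2. (c1 \<alpha> * c2 \<beta>) * (\<Prod>e\<in>E. x e ^ (\<alpha> e + \<beta> e)))" for x
    unfolding m1(3)[rule_format] m2(3)[rule_format] sum_product power_add prod.distrib
    by (rule sum.cong[OF HOL.refl], rule sum.cong[OF HOL.refl]) (simp add: algebra_simps)
  have "poly_fun E (a + b) (\<lambda>x. \<Sum>\<alpha>\<in>M1. \<Sum>\<beta>\<in>M2. (c1 \<alpha> * c2 \<beta>) * (\<Prod>e\<in>E. x e ^ (\<alpha> e + \<beta> e)))"
    using m1(2) m2(2)
    by (intro poly_fun_sum[OF m1(1)] poly_fun_sum[OF m2(1)] ballI poly_fun_monomial)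
      (auto simp: sum.distrib add_mono)
  then show ?thesis using expand by simp
qed

lemma poly_fun_coord:
  assumes "finite E" "d \<in> E"
  shows "poly_fun E 1 (\<lambda>x. x d)"
proof -
  have "(\<Prod>e\<in>E. x e ^ (if e = d then 1 else 0)) = x d" for x :: "'a \<Rightarrow> real"
  proof -
    have "(\<Prod>e\<in>E. x e ^ (if e = d then 1 else 0)) = (\<Prod>e\<in>E. if e = d then x e else 1)"
      by (rule prod.cong) auto
    also have "\<dots> = x d" using assms by (simp add: prod.delta)
    finally show ?thesis .
  qed
  then show ?thesis
    using poly_fun_monomial[of E "\<lambda>e. if e = d then 1 else 0" 1 1] assms by (simp add: sum.delta)
qed

lemma poly_fun_prod:
  assumes "finite S" "\<forall>i\<in>S. poly_fun E 1 (f i)"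
  shows "poly_fun E (card S) (\<lambda>x. \<Prod>i\<in>S. f i x)"
  using assms
proof (induction S rule: finite_induct)
  case empty
  then show ?case using poly_fun_const[of E 0 1] by simp
next
  case (insert i S)
  then show ?case using poly_fun_mult[of E 1 "f i" "card S" "\<lambda>x. \<Prod>i\<in>S. f i x"] by simp
qed

lemma poly_fun_fun_upd:
  assumes "poly_fun E k h" "finite E" "e \<in> E"
  shows "poly_fun (E - {e}) k (\<lambda>x. h (x(e := a)))"
proof -
  obtain M c where m: "finite M" "\<forall>\<alpha>\<in>M. (\<forall>e. e \<notin> E \<longrightarrow> \<alpha> e = 0) \<and> (\<Sum>e\<in>E. \<alpha> e) \<le> k"
    "\<forall>x. h x = (\<Sum>\<alpha>\<in>M. c \<alpha> * (\<Prod>e\<in>E. x e ^ \<alpha> e))"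
    using assms(1) unfolding poly_fun_def by blast
  have expand: "h (x(e := a)) = (\<Sum>\<alpha>\<in>M. (c \<alpha> * a ^ \<alpha> e) * (\<Prod>d\<in>E - {e}. x d ^ (\<alpha>(e := 0)) d))"
    for x
    unfolding m(3)[rule_format]
  proof (rule sum.cong[OF HOL.refl])
    fix \<alpha>
    have "(\<Prod>d\<in>E. (x(e := a)) d ^ \<alpha> d) = a ^ \<alpha> e * (\<Prod>d\<in>E - {e}. (x(e := a)) d ^ \<alpha> d)"
      using assms by (simp add: prod.remove)
    also have "(\<Prod>d\<in>E - {e}. (x(e := a)) d ^ \<alpha> d) = (\<Prod>d\<in>E - {e}. x d ^ (\<alpha>(e := 0)) d)"
      by (rule prod.cong) auto
    finally show "c \<alpha> * (\<Prod>d\<in>E. (x(e := a)) d ^ \<alpha> d)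
        = c \<alpha> * a ^ \<alpha> e * (\<Prod>d\<in>E - {e}. x d ^ (\<alpha>(e := 0)) d)"
      by simp
  qed
  have "poly_fun (E - {e}) k (\<lambda>x. \<Sum>\<alpha>\<in>M. (c \<alpha> * a ^ \<alpha> e) * (\<Prod>d\<in>E - {e}. x d ^ (\<alpha>(e := 0)) d))"
  proof (rule poly_fun_sum[OF m(1)], rule ballI)
    fix \<alpha> assume \<alpha>: "\<alpha> \<in> M"
    have "(\<Sum>d\<in>E - {e}. (\<alpha>(e := 0)) d) = (\<Sum>d\<in>E - {e}. \<alpha> d)" by (rule sum.cong) auto
    also have "\<dots> \<le> (\<Sum>d\<in>E. \<alpha> d)" using assms(2) by (intro sum_mono2) auto
    finally have "(\<Sum>d\<in>E - {e}. (\<alpha>(e := 0)) d) \<le> k" using m(2) \<alpha> order.trans by blast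
    then show "poly_fun (E - {e}) k (\<lambda>x. (c \<alpha> * a ^ \<alpha> e) * (\<Prod>d\<in>E - {e}. x d ^ (\<alpha>(e := 0)) d))"
      using m(2) \<alpha> by (intro poly_fun_monomial) auto
  qed
  then show ?thesis using expand by simp
qed

lemma affine_fun_mono:
  assumes "affine_fun E' l" "E' \<subseteq> E" "finite E"
  shows "affine_fun E l"
proof -
  obtain c a where l: "\<forall>x. l x = c + (\<Sum>e\<in>E'. a e * x e)"
    using assms(1) unfolding affine_fun_def by blast
  have "(\<Sum>d\<in>E. (if d \<in> E' then a d else 0) * x d) = (\<Sum>d\<in>E'. a d * x d)" for x
    by (rule sum.mono_neutral_cong_right) (use assms in auto)
  then show ?thesis unfolding affine_fun_def using l
    by (intro exI[of _ c] exI[of _ "\<lambda>d. if d \<in> E' then a d else 0"]) auto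
qed

lemma affine_fun_fun_upd_eq:
  assumes "affine_fun E l" "e \<notin> E"
  shows "l (x(e := a)) = l x"
proof -
  obtain c b where l: "\<forall>x. l x = c + (\<Sum>e\<in>E. b e * x e)"
    using assms(1) unfolding affine_fun_def by blast
  have "(\<Sum>d\<in>E. b d * (x(e := a)) d) = (\<Sum>d\<in>E. b d * x d)" by (rule sum.cong) (use assms in auto)
  then show ?thesis using l by simp
qed

lemma affine_fun_fun_upd:
  assumes "affine_fun E l" "finite E" "e \<in> E"
  shows "affine_fun (E - {e}) (\<lambda>x. l (x(e := a)))"
proof -
  obtain c b where l: "\<forall>x. l x = c + (\<Sum>e\<in>E. b e * x e)"
    using assms(1) unfolding affine_fun_def by blast
  have "l (x(e := a)) = (c + b e * a) + (\<Sum>d\<in>E - {e}. b d * x d)" for x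
  proof -
    have "(\<Sum>d\<in>E. b d * (x(e := a)) d) = b e * a + (\<Sum>d\<in>E - {e}. b d * (x(e := a)) d)"
      using assms by (simp add: sum.remove)
    also have "(\<Sum>d\<in>E - {e}. b d * (x(e := a)) d) = (\<Sum>d\<in>E - {e}. b d * x d)"
      by (rule sum.cong) auto
    finally show ?thesis using l by simp
  qed
  then show ?thesis unfolding affine_fun_def by blast
qed

lemma affine_fun_add_scaled:
  assumes "affine_fun E p" "affine_fun E q"
  shows "affine_fun E (\<lambda>x. p x + t * q x)"
proof -
  obtain c1 a1 where p: "\<forall>x. p x = c1 + (\<Sum>e\<in>E. a1 e * x e)"
    using assms(1) unfolding affine_fun_def by blast
  obtain c2 a2 where q: "\<forall>x. q x = c2 + (\<Sum>e\<in>E. a2 e * x e)"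
    using assms(2) unfolding affine_fun_def by blast
  have "p x + t * q x = (c1 + t * c2) + (\<Sum>e\<in>E. (a1 e + t * a2 e) * x e)" for x
    using p q by (simp add: algebra_simps sum.distrib sum_distrib_left)
  then show ?thesis unfolding affine_fun_def
    by (intro exI[of _ "c1 + t * c2"] exI[of _ "\<lambda>e. a1 e + t * a2 e"]) auto
qed

lemma affine_fun_coord:
  assumes "finite E" "e \<in> E"
  shows "affine_fun E (\<lambda>x. c + b * x e)"
proof -
  have "(\<Sum>d\<in>E. (if d = e then b else 0) * x d) = b * x e" for x :: "'a \<Rightarrow> real"
  proof -
    have "(\<Sum>d\<in>E. (if d = e then b else 0) * x d) = (\<Sum>d\<in>E. if d = e then b * x d else 0)"
      by (rule sum.cong) auto
    then show ?thesis using assms by (simp add: sum.delta)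
  qed
  then show ?thesis unfolding affine_fun_def by metis
qed

section \<open>Faces of finite point configurations\<close>

lemma finite_dominated_by_positive:
  fixes f g :: "'b \<Rightarrow> real"
  assumes "finite S" "\<forall>v\<in>S. 0 < f v"
  obtains t where "\<forall>v\<in>S. g v < t * f v"
proof
  let ?t = "(\<Sum>v\<in>S. \<bar>g v\<bar> / f v) + 1"
  show "\<forall>v\<in>S. g v < ?t * f v"
  proof
    fix v assume v: "v \<in> S"
    have "\<bar>g v\<bar> / f v \<le> (\<Sum>v\<in>S. \<bar>g v\<bar> / f v)"
      using assms v by (intro member_le_sum) auto
    then have "\<bar>g v\<bar> / f v < ?t" by linarith
    then have "\<bar>g v\<bar> < ?t * f v" using assms(2) v by (simp add: pos_divide_less_eq)
    then show "g v < ?t * f v" by linarith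
  qed
qed

lemma largest_scaling_below:
  fixes h k :: "'b \<Rightarrow> real"
  assumes "finite V" "\<forall>v\<in>V. 0 \<le> h v" "\<forall>v\<in>V. 0 \<le> k v" "\<exists>v\<in>V. k v \<noteq> 0"
  obtains s where "\<forall>v\<in>V. s * k v \<le> h v" "\<exists>v\<in>V. k v \<noteq> 0 \<and> h v = s * k v"
proof -
  define D where "D = {v\<in>V. k v \<noteq> 0}"
  have D: "finite D" "D \<noteq> {}" using assms(1,4) unfolding D_def by auto
  have kpos: "0 < k v" if "v \<in> D" for v using that assms(3) unfolding D_def by force
  define s where "s = Min ((\<lambda>v. h v / k v) ` D)"
  have "s \<in> (\<lambda>v. h v / k v) ` D" unfolding s_def using D by (intro Min_in) auto
  then obtain v0 where v0: "v0 \<in> D" "s = h v0 / k v0" by blast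
  have "s * k v \<le> h v" if "v \<in> V" for v
  proof (cases "v \<in> D")
    case True
    then have "s \<le> h v / k v" unfolding s_def using D by simp
    then show ?thesis using kpos[OF True] by (simp add: pos_le_divide_eq)
  next
    case False
    then show ?thesis using that assms(2) unfolding D_def by simp
  qed
  moreover have "k v0 \<noteq> 0 \<and> h v0 = s * k v0" using v0 kpos[OF v0(1)] by simp
  ultimately show ?thesis using that v0(1) unfolding D_def by blast
qed

lemma face_subset: "face E V F \<Longrightarrow> F \<subseteq> V"
  unfolding face_def by auto

lemma facet_subset: "facet E V F \<Longrightarrow> F \<subseteq> V"
  by (rule face_subset[of E]) (simp add: facet_def)

lemma face_lift:
  assumes "finite V" "face E V F" "affine_fun E g" "nonneg_on F g"
  obtains L where "affine_fun E L" "nonneg_on V L" "\<forall>v\<in>F. L v = g v" "\<forall>v\<in>V - F. 0 < L v"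
proof -
  obtain f where f: "affine_fun E f" "nonneg_on V f" "F = {v\<in>V. f v = 0}"
    using assms(2) unfolding face_def by blast
  have "\<forall>v\<in>V - F. 0 < f v" using f(2,3) unfolding nonneg_on_def by (auto simp: order_less_le)
  then obtain t where t: "\<forall>v\<in>V - F. - g v < t * f v"
    using finite_dominated_by_positive[of "V - F" f "\<lambda>v. - g v"] assms(1) by blast
  define L where "L x = g x + t * f x" for x
  have "affine_fun E L" unfolding L_def by (rule affine_fun_add_scaled[OF assms(3) f(1)])
  moreover have on_F: "\<forall>v\<in>F. L v = g v" unfolding L_def using f(3) by simp
  moreover have off_F: "\<forall>v\<in>V - F. 0 < L v" unfolding L_def using t by force
  moreover have "nonneg_on V L"
    unfolding nonneg_on_def
  proof
    fix v assume "v \<in> V"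
    show "0 \<le> L v"
    proof (cases "v \<in> F")
      case True
      then show ?thesis using on_F assms(4) unfolding nonneg_on_def by simp
    next
      case False
      then show ?thesis using off_F \<open>v \<in> V\<close> by (meson DiffI less_imp_le)
    qed
  qed
  ultimately show ?thesis using that by blast
qed

lemma face_trans:
  assumes "finite V" "face E V F" "face E F G"
  shows "face E V G"
proof -
  obtain g where g: "affine_fun E g" "nonneg_on F g" "G = {v\<in>F. g v = 0}"
    using assms(3) unfolding face_def by blast
  obtain L where L: "affine_fun E L" "nonneg_on V L" "\<forall>v\<in>F. L v = g v" "\<forall>v\<in>V - F. 0 < L v"
    using face_lift[OF assms(1,2) g(1,2)] .
  have "G = {v\<in>V. L v = 0}"
  proof
    show "G \<subseteq> {v\<in>V. L v = 0}"
    proof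
      fix v assume "v \<in> G"
      then have "v \<in> F" "g v = 0" using g(3) by auto
      then show "v \<in> {v\<in>V. L v = 0}" using L(3) face_subset[OF assms(2)] by auto
    qed
    show "{v\<in>V. L v = 0} \<subseteq> G"
    proof
      fix v assume v: "v \<in> {v\<in>V. L v = 0}"
      have "v \<in> F"
      proof (rule ccontr)
        assume "v \<notin> F"
        then have "0 < L v" using L(4) v by blast
        then show False using v by simp
      qed
      then show "v \<in> G" using g(3) L(3) v by simp
    qed
  qed
  then show ?thesis unfolding face_def using L(1,2) by blast
qed

lemma face_coord_eq:
  assumes "finite E" "e \<in> E" "\<forall>v\<in>V. v e = 0 \<or> v e = 1" "c = 0 \<or> c = 1"
  shows "face E V {v\<in>V. v e = c}"
proof -
  define f where "f x = c + (1 - 2 * c) * x e" for x :: "'a \<Rightarrow> real"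
  have "affine_fun E f" unfolding f_def by (rule affine_fun_coord[OF assms(1,2)])
  moreover have f_eq: "f v = (if v e = c then 0 else 1)" if "v \<in> V" for v
    using assms(3,4) that unfolding f_def by auto
  then have "nonneg_on V f" "{v\<in>V. v e = c} = {v\<in>V. f v = 0}"
    unfolding nonneg_on_def by (auto split: if_splits)
  ultimately show ?thesis unfolding face_def by blast
qed

lemma face_project:
  assumes "finite E" "e \<in> E" "\<forall>v\<in>F. v e = c" "face E F G"
  shows "face (E - {e}) ((\<lambda>v. v(e := 0)) ` F) ((\<lambda>v. v(e := 0)) ` G)"
proof -
  obtain g where g: "affine_fun E g" "nonneg_on F g" "G = {v\<in>F. g v = 0}"
    using assms(4) unfolding face_def by blast
  have unproject: "(v(e := 0))(e := c) = v" if "v \<in> F" for v using assms(3) that by auto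
  have "affine_fun (E - {e}) (\<lambda>x. g (x(e := c)))" by (rule affine_fun_fun_upd[OF g(1) assms(1,2)])
  moreover have "nonneg_on ((\<lambda>v. v(e := 0)) ` F) (\<lambda>x. g (x(e := c)))"
    using g(2) unproject unfolding nonneg_on_def by auto
  moreover have "(\<lambda>v. v(e := 0)) ` G = {w\<in>(\<lambda>v. v(e := 0)) ` F. g (w(e := c)) = 0}"
    using g(3) unproject by force
  ultimately show ?thesis unfolding face_def by blast
qed

lemma facet_defining_unproject:
  assumes "finite E" "e \<in> E" "\<forall>v\<in>F. v e = c"
    and "facet_defining (E - {e}) ((\<lambda>v. v(e := 0)) ` F) l"
  shows "facet_defining E F l"
proof -
  let ?\<pi> = "\<lambda>v :: 'a \<Rightarrow> real. v(e := 0)"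
  define Z where "Z = {v\<in>F. l v = 0}"
  have aff: "affine_fun (E - {e}) l" and nn: "nonneg_on (?\<pi> ` F) l"
    and facet': "facet (E - {e}) (?\<pi> ` F) {w\<in>?\<pi> ` F. l w = 0}"
    using assms(4) unfolding facet_defining_def by auto
  have l_\<pi>: "l (?\<pi> v) = l v" for v using affine_fun_fun_upd_eq[OF aff] by simp
  have inj: "inj_on ?\<pi> F"
    using assms(3) by (intro inj_onI) (metis fun_upd_triv fun_upd_upd)
  have Z': "{w\<in>?\<pi> ` F. l w = 0} = ?\<pi> ` Z" unfolding Z_def using l_\<pi> by auto
  have "affine_fun E l" using affine_fun_mono[OF aff _ assms(1)] by blast
  moreover have "nonneg_on F l" using nn l_\<pi> unfolding nonneg_on_def by auto
  moreover have "facet E F Z"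
    unfolding facet_def
  proof (intro conjI allI impI)
    show "face E F Z" unfolding face_def Z_def using \<open>affine_fun E l\<close> \<open>nonneg_on F l\<close> by blast
    show "Z \<noteq> F" using facet' Z' unfolding facet_def by auto
  next
    fix G assume G: "face E F G \<and> G \<noteq> F \<and> Z \<subseteq> G"
    have GF: "G \<subseteq> F" and ZF: "Z \<subseteq> F" using G face_subset unfolding Z_def by auto
    have "face (E - {e}) (?\<pi> ` F) (?\<pi> ` G)" using face_project[OF assms(1-3)] G by blast
    moreover have "?\<pi> ` G \<noteq> ?\<pi> ` F" using G GF inj_on_image_eq_iff[OF inj] by blast
    moreover have "?\<pi> ` Z \<subseteq> ?\<pi> ` G" using G by blast
    ultimately have "?\<pi> ` G = ?\<pi> ` Z" using facet' unfolding facet_def Z' by blast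
    then show "G = Z" using inj_on_image_eq_iff[OF inj GF ZF] by blast
  qed
  ultimately show ?thesis unfolding facet_defining_def Z_def[symmetric] by blast
qed

lemma facet_zero_set_cases:
  assumes "facet E F Z" "affine_fun E g" "nonneg_on F g" "\<forall>v\<in>Z. g v = 0"
  shows "{v\<in>F. g v = 0} = F \<or> {v\<in>F. g v = 0} = Z"
proof -
  have "face E F {v\<in>F. g v = 0}" unfolding face_def using assms(2,3) by blast
  moreover have "Z \<subseteq> {v\<in>F. g v = 0}" using assms(4) facet_subset[OF assms(1)] by blast
  ultimately show ?thesis using assms(1) unfolding facet_def by blast
qed

text \<open>Subtracting from g the largest multiple of l that keeps it nonnegative creates a
zero outside the facet, so the difference vanishes on all of F.\<close>
lemma card_image_eq_facet_defining:
  assumes "finite F" "facet_defining E F l"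
    and "affine_fun E g" "nonneg_on F g" "{v\<in>F. g v = 0} = {v\<in>F. l v = 0}"
  shows "card (g ` F) = card (l ` F)"
proof -
  define Z where "Z = {v\<in>F. l v = 0}"
  have l: "affine_fun E l" "nonneg_on F l" "facet E F Z"
    using assms(2) unfolding facet_defining_def Z_def by auto
  have "Z \<noteq> F" using l(3) unfolding facet_def by blast
  then have "\<exists>v\<in>F. l v \<noteq> 0" unfolding Z_def by blast
  then obtain s v0 where below: "\<forall>v\<in>F. s * l v \<le> g v"
    and v0: "v0 \<in> F" "l v0 \<noteq> 0" "g v0 = s * l v0"
    using largest_scaling_below[OF assms(1), of g l] assms(4) l(2)
    unfolding nonneg_on_def by metis
  define r where "r x = g x + (- s) * l x" for x
  have "affine_fun E r" unfolding r_def by (rule affine_fun_add_scaled[OF assms(3) l(1)])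
  moreover have "nonneg_on F r" using below unfolding nonneg_on_def r_def by simp
  moreover have "\<forall>v\<in>Z. r v = 0" using assms(5) unfolding r_def Z_def by auto
  ultimately have "{v\<in>F. r v = 0} = F \<or> {v\<in>F. r v = 0} = Z"
    by (rule facet_zero_set_cases[OF l(3)])
  moreover have "v0 \<in> {v\<in>F. r v = 0}" "v0 \<notin> Z" using v0 unfolding r_def Z_def by auto
  ultimately have g_eq: "\<forall>v\<in>F. g v = s * l v" unfolding r_def by auto
  have "g v0 \<noteq> 0" using assms(5) v0(1,2) by blast
  then have "inj_on (\<lambda>y. s * y) (l ` F)" using v0(3) by (auto simp: inj_on_def)
  moreover have "g ` F = (\<lambda>y. s * y) ` (l ` F)" using g_eq by (auto simp: image_iff)
  ultimately show ?thesis by (simp add: card_image)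
qed

lemma face_enlarge:
  assumes "finite V" "face E V G" "face E V K" "G \<subset> K" "K \<noteq> V"
  obtains H where "face E V H" "G \<subset> H" "H \<noteq> V" "H \<inter> K = G"
proof -
  obtain h where h: "affine_fun E h" "nonneg_on V h" "G = {v\<in>V. h v = 0}"
    using assms(2) unfolding face_def by blast
  obtain k where k: "affine_fun E k" "nonneg_on V k" "K = {v\<in>V. k v = 0}"
    using assms(3) unfolding face_def by blast
  have "\<exists>v\<in>V. k v \<noteq> 0" using assms(5) k(3) by blast
  then obtain s v0 where below: "\<forall>v\<in>V. s * k v \<le> h v"
    and v0: "v0 \<in> V" "k v0 \<noteq> 0" "h v0 = s * k v0"
    using largest_scaling_below[OF assms(1), of h k] h(2) k(2)
    unfolding nonneg_on_def by metis
  define H where "H = {v\<in>V. h v + (- s) * k v = 0}"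
  have "affine_fun E (\<lambda>x. h x + (- s) * k x)" by (rule affine_fun_add_scaled[OF h(1) k(1)])
  moreover have "nonneg_on V (\<lambda>x. h x + (- s) * k x)" using below unfolding nonneg_on_def by simp
  ultimately have "face E V H" unfolding face_def H_def by blast
  moreover have HK: "H \<inter> K = G" using assms(4) h(3) k(3) unfolding H_def by auto
  moreover have "G \<subset> H"
  proof -
    have "G \<subseteq> H" using HK by blast
    moreover have "v0 \<in> H - K" using v0 k(3) unfolding H_def by simp
    ultimately show ?thesis using assms(4) by blast
  qed
  moreover have "H \<noteq> V" using HK assms(4) face_subset[OF assms(3)] by blast
  ultimately show ?thesis using that by blast
qed

text \<open>A maximal face of V with trace Z on F is a facet: a larger proper face K either has
the same trace, or contains F, and then it can be tilted into a still larger face with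
trace Z.\<close>
lemma facet_of_face_extends:
  assumes "finite V" "face E V F" "facet E F Z"
  obtains G where "facet E V G" "G \<inter> F = Z"
proof -
  define S where "S = {G. face E V G \<and> G \<noteq> V \<and> G \<inter> F = Z}"
  have FV: "F \<subseteq> V" and ZF: "Z \<subseteq> F" using face_subset[OF assms(2)] facet_subset[OF assms(3)] .
  have "face E V Z" using face_trans[OF assms(1,2)] assms(3) unfolding facet_def by blast
  moreover have "Z \<noteq> V" using assms(3) FV ZF unfolding facet_def by blast
  ultimately have "Z \<in> S" unfolding S_def using ZF by blast
  moreover have "S \<subseteq> Pow V" unfolding S_def using face_subset by blast
  then have "finite S" using assms(1) by (simp add: finite_subset)
  ultimately obtain G where G: "G \<in> S" and maximal: "\<forall>H\<in>S. G \<subseteq> H \<longrightarrow> H = G"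
    using finite_has_maximal[of S] by blast
  have "facet E V G"
    unfolding facet_def
  proof (intro conjI allI impI)
    show "face E V G" "G \<noteq> V" using G unfolding S_def by auto
  next
    fix K assume K: "face E V K \<and> K \<noteq> V \<and> G \<subseteq> K"
    show "K = G"
    proof (rule ccontr)
      assume "K \<noteq> G"
      with K have GK: "G \<subset> K" by blast
      obtain k where k: "affine_fun E k" "nonneg_on V k" "K = {v\<in>V. k v = 0}"
        using K unfolding face_def by blast
      have "nonneg_on F k" using k(2) FV unfolding nonneg_on_def by blast
      moreover have "\<forall>v\<in>Z. k v = 0" using G GK k(3) unfolding S_def by blast
      ultimately have "{v\<in>F. k v = 0} = F \<or> {v\<in>F. k v = 0} = Z"
        using facet_zero_set_cases[OF assms(3) k(1)] by blast
      then show False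
      proof
        assume "{v\<in>F. k v = 0} = F"
        then have "F \<subseteq> K" using k(3) FV by blast
        obtain H where "face E V H" "G \<subset> H" "H \<noteq> V" "H \<inter> K = G"
          using face_enlarge[OF assms(1)] G K GK unfolding S_def by blast
        then have "H \<in> S" using G \<open>F \<subseteq> K\<close> unfolding S_def by blast
        then show False using maximal \<open>G \<subset> H\<close> by blast
      next
        assume "{v\<in>F. k v = 0} = Z"
        then have "K \<in> S" using K k(3) FV unfolding S_def by blast
        then show False using maximal GK by blast
      qed
    qed
  qed
  then show ?thesis using that G unfolding S_def by blast
qed

section \<open>Theta rank and levelness of faces and projections\<close>

definition theta_exact :: "nat \<Rightarrow> 'a set \<Rightarrow> ('a \<Rightarrow> real) set \<Rightarrow> bool" where
  "theta_exact k E V \<longleftrightarrow> (\<forall>l. affine_fun E l \<and> nonneg_on V l \<longrightarrow> k_sos E k V l)"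

definition level_bounded :: "nat \<Rightarrow> 'a set \<Rightarrow> ('a \<Rightarrow> real) set \<Rightarrow> bool" where
  "level_bounded k E V \<longleftrightarrow> (\<forall>l. facet_defining E V l \<longrightarrow> card (l ` V) \<le> k)"

lemma theta_exact_mono: "theta_exact k E V \<Longrightarrow> k \<le> k' \<Longrightarrow> theta_exact k' E V"
  unfolding theta_exact_def k_sos_def by (meson poly_fun_mono)

lemma level_bounded_mono: "level_bounded k E V \<Longrightarrow> k \<le> k' \<Longrightarrow> level_bounded k' E V"
  unfolding level_bounded_def by (meson order.trans)

lemma level_bounded_card: "finite V \<Longrightarrow> level_bounded (card V) E V"
  unfolding level_bounded_def by (simp add: card_image_le)

lemma theta_rank_eq_Least: "theta_rank E V = (LEAST k. theta_exact k E V)"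
  unfolding theta_rank_def theta_exact_def ..

lemma levelness_eq_Least: "levelness E V = (LEAST k. level_bounded k E V)"
  unfolding levelness_def level_bounded_def ..

lemma theta_rank_le: "theta_exact k E V \<Longrightarrow> theta_rank E V \<le> k"
  unfolding theta_rank_eq_Least by (rule Least_le)

lemma levelness_le: "level_bounded k E V \<Longrightarrow> levelness E V \<le> k"
  unfolding levelness_eq_Least by (rule Least_le)

lemma theta_exact_theta_rank: "theta_exact n E V \<Longrightarrow> theta_exact (theta_rank E V) E V"
  unfolding theta_rank_eq_Least by (rule LeastI)

lemma level_bounded_levelness: "finite V \<Longrightarrow> level_bounded (levelness E V) E V"
  unfolding levelness_eq_Least by (rule LeastI[where k = "card V"]) (rule level_bounded_card)

lemma theta_exact_face:
  assumes "finite V" "face E V F" "theta_exact k E V"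
  shows "theta_exact k E F"
  unfolding theta_exact_def
proof (intro allI impI)
  fix l assume l: "affine_fun E l \<and> nonneg_on F l"
  obtain L where L: "affine_fun E L" "nonneg_on V L" "\<forall>v\<in>F. L v = l v"
    using face_lift[OF assms(1,2)] l by blast
  then obtain hs where hs: "\<forall>h\<in>set hs. poly_fun E k h" "\<forall>v\<in>V. L v = (\<Sum>h\<leftarrow>hs. (h v)\<^sup>2)"
    using assms(3) L(1) unfolding theta_exact_def k_sos_def by blast
  moreover have "\<forall>v\<in>F. l v = (\<Sum>h\<leftarrow>hs. (h v)\<^sup>2)"
    using hs(2) L(3) face_subset[OF assms(2)] by (metis subsetD)
  ultimately show "k_sos E k F l" unfolding k_sos_def by blast
qed

lemma level_bounded_face:
  assumes "finite V" "face E V F" "level_bounded k E V"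
  shows "level_bounded k E F"
  unfolding level_bounded_def
proof (intro allI impI)
  fix l assume l: "facet_defining E F l"
  have FV: "F \<subseteq> V" using face_subset[OF assms(2)] .
  obtain G where G: "facet E V G" "G \<inter> F = {v\<in>F. l v = 0}"
    using facet_of_face_extends[OF assms(1,2)] l unfolding facet_defining_def by blast
  obtain h where h: "affine_fun E h" "nonneg_on V h" "G = {v\<in>V. h v = 0}"
    using G(1) unfolding facet_def face_def by blast
  have "nonneg_on F h" using h(2) FV unfolding nonneg_on_def by blast
  moreover have "{v\<in>F. h v = 0} = {v\<in>F. l v = 0}" using G(2) h(3) FV by blast
  ultimately have "card (l ` F) = card (h ` F)"
    using card_image_eq_facet_defining[OF finite_subset[OF FV assms(1)] l h(1)] by simp
  also have "\<dots> \<le> card (h ` V)" using FV assms(1) by (intro card_mono) auto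
  also have "\<dots> \<le> k" using assms(3) G(1) h unfolding level_bounded_def facet_defining_def by auto
  finally show "card (l ` F) \<le> k" .
qed

lemma theta_exact_project:
  assumes "finite E" "e \<in> E" "\<forall>v\<in>F. v e = c" "theta_exact k E F"
  shows "theta_exact k (E - {e}) ((\<lambda>v. v(e := 0)) ` F)"
  unfolding theta_exact_def
proof (intro allI impI)
  fix l assume "affine_fun (E - {e}) l \<and> nonneg_on ((\<lambda>v. v(e := 0)) ` F) l"
  then have aff: "affine_fun (E - {e}) l" and nn: "nonneg_on ((\<lambda>v. v(e := 0)) ` F) l" by auto
  have l_upd: "l (x(e := a)) = l x" for x a using affine_fun_fun_upd_eq[OF aff] by simp
  have "affine_fun E l" using affine_fun_mono[OF aff _ assms(1)] by blast
  moreover have "nonneg_on F l" using nn l_upd unfolding nonneg_on_def by auto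
  ultimately obtain hs where hs: "\<forall>h\<in>set hs. poly_fun E k h" "\<forall>v\<in>F. l v = (\<Sum>h\<leftarrow>hs. (h v)\<^sup>2)"
    using assms(4) unfolding theta_exact_def k_sos_def by blast
  show "k_sos (E - {e}) k ((\<lambda>v. v(e := 0)) ` F) l"
    unfolding k_sos_def
  proof (intro exI[of _ "map (\<lambda>h x. h (x(e := c))) hs"] conjI ballI)
    fix h assume "h \<in> set (map (\<lambda>h x. h (x(e := c))) hs)"
    then show "poly_fun (E - {e}) k h" using hs(1) poly_fun_fun_upd[OF _ assms(1,2)] by auto
  next
    fix w assume "w \<in> (\<lambda>v. v(e := 0)) ` F"
    then obtain v where v: "v \<in> F" "w = v(e := 0)" by blast
    then have "w(e := c) = v" using assms(3) by auto
    then show "l w = (\<Sum>h\<leftarrow>map (\<lambda>h x. h (x(e := c))) hs. (h w)\<^sup>2)"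
      using hs(2) v l_upd by (simp add: o_def)
  qed
qed

lemma level_bounded_project:
  assumes "finite E" "e \<in> E" "\<forall>v\<in>F. v e = c" "level_bounded k E F"
  shows "level_bounded k (E - {e}) ((\<lambda>v. v(e := 0)) ` F)"
  unfolding level_bounded_def
proof (intro allI impI)
  fix l assume l: "facet_defining (E - {e}) ((\<lambda>v. v(e := 0)) ` F) l"
  have "l ` (\<lambda>v. v(e := 0)) ` F = l ` F"
    using affine_fun_fun_upd_eq[of "E - {e}" l e] l unfolding facet_defining_def
    by (auto simp: image_image)
  then show "card (l ` (\<lambda>v. v(e := 0)) ` F) \<le> k"
    using assms(4) facet_defining_unproject[OF assms(1-3) l] unfolding level_bounded_def by simp
qed

definition coord_slice :: "'a \<Rightarrow> real \<Rightarrow> ('a \<Rightarrow> real) set \<Rightarrow> ('a \<Rightarrow> real) set" where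
  "coord_slice e c V = (\<lambda>v. v(e := 0)) ` {v\<in>V. v e = c}"

lemma theta_exact_coord_slice:
  assumes "finite E" "e \<in> E" "finite V" "\<forall>v\<in>V. v e = 0 \<or> v e = 1" "c = 0 \<or> c = 1"
    and "theta_exact k E V"
  shows "theta_exact k (E - {e}) (coord_slice e c V)"
  unfolding coord_slice_def
  using theta_exact_project[OF assms(1,2) _ theta_exact_face[OF assms(3) face_coord_eq assms(6)]]
    assms(1,2,4,5) by blast

lemma level_bounded_coord_slice:
  assumes "finite E" "e \<in> E" "finite V" "\<forall>v\<in>V. v e = 0 \<or> v e = 1" "c = 0 \<or> c = 1"
    and "level_bounded k E V"
  shows "level_bounded k (E - {e}) (coord_slice e c V)"
  unfolding coord_slice_def
  using level_bounded_project[OF assms(1,2) _ level_bounded_face[OF assms(3) face_coord_eq assms(6)]]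
    assms(1,2,4,5) by blast

section \<open>Base configurations and minors\<close>

definition cube_vertex_poly :: "'a set \<Rightarrow> 'a set \<Rightarrow> ('a \<Rightarrow> real) \<Rightarrow> real" where
  "cube_vertex_poly E B x = (\<Prod>d\<in>E. if d \<in> B then x d else 1 - x d)"

lemma poly_fun_cube_vertex_poly:
  assumes "finite E"
  shows "poly_fun E (card E) (cube_vertex_poly E B)"
  unfolding cube_vertex_poly_def
proof (rule poly_fun_prod[OF assms], rule ballI)
  fix d assume d: "d \<in> E"
  have "poly_fun E 1 (\<lambda>x. (- 1) * x d)"
    using poly_fun_mult[OF poly_fun_const[of E 0 "- 1"] poly_fun_coord[OF assms d]] by simp
  then have "poly_fun E 1 (\<lambda>x. 1 + (- 1) * x d)" by (rule poly_fun_add[OF poly_fun_const])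
  then show "poly_fun E 1 (\<lambda>x. if d \<in> B then x d else 1 - x d)"
    using poly_fun_coord[OF assms d] by (cases "d \<in> B") simp_all
qed

lemma cube_vertex_poly_indicator:
  assumes "B \<subseteq> E" "B' \<subseteq> E" "finite E"
  shows "cube_vertex_poly E B (indicator B') = (if B = B' then 1 else 0)"
proof (cases "B = B'")
  case True
  have "(\<Prod>d\<in>E. if d \<in> B then (indicator B' d :: real) else 1 - indicator B' d) = (\<Prod>d\<in>E. 1)"
    by (rule prod.cong) (use True in auto)
  then show ?thesis unfolding cube_vertex_poly_def using True by simp
next
  case False
  then obtain d where d: "d \<in> E" "(d \<in> B) \<noteq> (d \<in> B')" using assms(1,2) by blast
  then have "(if d \<in> B then (indicator B' d :: real) else 1 - indicator B' d) = 0"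
    by (auto simp: indicator_def)
  then have "cube_vertex_poly E B (indicator B') = 0"
    unfolding cube_vertex_poly_def using d(1) assms(3) by (subst prod_zero_iff) blast+
  then show ?thesis using False by simp
qed

lemma theta_exact_base_config:
  assumes "finite E" "\<forall>B\<in>\<B>. B \<subseteq> E" "finite \<B>"
  shows "theta_exact (card E) E (base_config \<B>)"
  unfolding theta_exact_def
proof (intro allI impI)
  fix l assume "affine_fun E l \<and> nonneg_on (base_config \<B>) l"
  then have nonneg: "\<forall>B\<in>\<B>. 0 \<le> l (indicator B)"
    unfolding nonneg_on_def base_config_def by auto
  define g where "g x = (\<Sum>B\<in>\<B>. sqrt (l (indicator B)) * cube_vertex_poly E B x)" for x
  have "poly_fun E (card E) g"
    unfolding g_def using poly_fun_mult[OF poly_fun_const[of E 0] poly_fun_cube_vertex_poly[OF assms(1)]]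
    by (intro poly_fun_sum[OF assms(3)]) simp
  moreover have "g (indicator B) = sqrt (l (indicator B))" if "B \<in> \<B>" for B
  proof -
    have "g (indicator B) = (\<Sum>B'\<in>\<B>. if B' = B then sqrt (l (indicator B')) else 0)"
      unfolding g_def using assms(2) that
      by (intro sum.cong) (auto simp: cube_vertex_poly_indicator[OF _ _ assms(1)])
    also have "\<dots> = sqrt (l (indicator B))" using assms(3) that by (simp add: sum.delta')
    finally show ?thesis .
  qed
  ultimately show "k_sos E (card E) (base_config \<B>) l"
    unfolding k_sos_def using nonneg
    by (intro exI[of _ "[g]"]) (auto simp: base_config_def)
qed

lemma coord_slice_0_base_config:
  "coord_slice e 0 (base_config \<B>) = base_config {B\<in>\<B>. e \<notin> B}"
proof -
  have "{v\<in>base_config \<B>. v e = 0} = base_config {B\<in>\<B>. e \<notin> B}"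
    unfolding base_config_def by (auto simp: indicator_def)
  then have "coord_slice e 0 (base_config \<B>) = (\<lambda>B. (indicator B)(e := 0)) ` {B\<in>\<B>. e \<notin> B}"
    unfolding coord_slice_def base_config_def by (simp add: image_image)
  also have "\<dots> = base_config {B\<in>\<B>. e \<notin> B}"
    unfolding base_config_def by (rule image_cong) (auto simp: indicator_def fun_eq_iff)
  finally show ?thesis .
qed

lemma coord_slice_1_base_config:
  "coord_slice e 1 (base_config \<B>) = base_config ((\<lambda>B. B - {e}) ` {B\<in>\<B>. e \<in> B})"
proof -
  have "{v\<in>base_config \<B>. v e = 1} = base_config {B\<in>\<B>. e \<in> B}"
    unfolding base_config_def by (auto simp: indicator_def)
  then have "coord_slice e 1 (base_config \<B>) = (\<lambda>B. (indicator B)(e := 0)) ` {B\<in>\<B>. e \<in> B}"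
    unfolding coord_slice_def base_config_def by (simp add: image_image)
  also have "\<dots> = base_config ((\<lambda>B. B - {e}) ` {B\<in>\<B>. e \<in> B})"
    unfolding base_config_def image_image
    by (rule image_cong) (auto simp: indicator_def fun_eq_iff)
  finally show ?thesis .
qed

lemma base_config_delete_bases:
  obtains c where "c = 0 \<or> c = 1" "base_config (delete_bases \<B> e) = coord_slice e c (base_config \<B>)"
proof (cases "\<forall>B\<in>\<B>. e \<in> B")
  case True
  moreover have "{B\<in>\<B>. e \<in> B} = \<B>" using True by blast
  ultimately have "delete_bases \<B> e = (\<lambda>B. B - {e}) ` {B\<in>\<B>. e \<in> B}"
    unfolding delete_bases_def by simp
  then show ?thesis using that[of 1] by (simp add: coord_slice_1_base_config)
next
  case False
  then have "delete_bases \<B> e = {B\<in>\<B>. e \<notin> B}" unfolding delete_bases_def by auto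
  then show ?thesis using that[of 0] by (simp add: coord_slice_0_base_config)
qed

lemma base_config_contract_bases:
  obtains c where "c = 0 \<or> c = 1" "base_config (contract_bases \<B> e) = coord_slice e c (base_config \<B>)"
proof (cases "\<forall>B\<in>\<B>. e \<notin> B")
  case True
  then have "contract_bases \<B> e = {B\<in>\<B>. e \<notin> B}" unfolding contract_bases_def by auto
  then show ?thesis using that[of 0] by (simp add: coord_slice_0_base_config)
next
  case False
  then have "contract_bases \<B> e = (\<lambda>B. B - {e}) ` {B\<in>\<B>. e \<in> B}"
    unfolding contract_bases_def by auto
  then show ?thesis using that[of 1] by (simp add: coord_slice_1_base_config)
qed

lemma base_config_01: "\<forall>v\<in>base_config \<B>. v e = 0 \<or> v e = 1"
  unfolding base_config_def by (auto simp: indicator_def)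

lemma finite_base_config: "finite \<B> \<Longrightarrow> finite (base_config \<B>)"
  unfolding base_config_def by simp

lemma is_minor_base_config_induct:
  assumes "is_minor E \<B> E' \<B>'" "finite E" "finite \<B>" "P E (base_config \<B>)"
    and step: "\<And>E V e c. finite E \<Longrightarrow> e \<in> E \<Longrightarrow> finite V \<Longrightarrow> \<forall>v\<in>V. v e = 0 \<or> v e = 1 \<Longrightarrow>
      c = 0 \<or> c = 1 \<Longrightarrow> P E V \<Longrightarrow> P (E - {e}) (coord_slice e c V)"
  shows "P E' (base_config \<B>')"
proof -
  have "finite E' \<and> finite \<B>' \<and> P E' (base_config \<B>')"
    using assms(1-4)
  proof (induction rule: is_minor.induct)
    case (refl E \<B>)
    then show ?case by simp
  next
    case (del E \<B> E' \<B>' e)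
    then have IH: "finite E'" "finite \<B>'" "P E' (base_config \<B>')" by auto
    obtain c where c: "c = 0 \<or> c = 1"
      "base_config (delete_bases \<B>' e) = coord_slice e c (base_config \<B>')"
      using base_config_delete_bases .
    have "P (E' - {e}) (coord_slice e c (base_config \<B>'))"
      using step[OF IH(1) del.hyps(2) finite_base_config[OF IH(2)] base_config_01 c(1) IH(3)] .
    moreover have "finite (delete_bases \<B>' e)" using IH(2) unfolding delete_bases_def by simp
    ultimately show ?case using IH(1) c(2) by simp
  next
    case (con E \<B> E' \<B>' e)
    then have IH: "finite E'" "finite \<B>'" "P E' (base_config \<B>')" by auto
    obtain c where c: "c = 0 \<or> c = 1"
      "base_config (contract_bases \<B>' e) = coord_slice e c (base_config \<B>')"
      using base_config_contract_bases .
    have "P (E' - {e}) (coord_slice e c (base_config \<B>'))"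
      using step[OF IH(1) con.hyps(2) finite_base_config[OF IH(2)] base_config_01 c(1) IH(3)] .
    moreover have "finite (contract_bases \<B>' e)" using IH(2) unfolding contract_bases_def by simp
    ultimately show ?case using IH(1) c(2) by simp
  qed
  then show ?thesis by blast
qed

theorem theorem2p11:
  fixes E :: "'a set" and \<B> :: "'a set set" and k :: nat
  assumes "matroid E \<B>"
  shows "(theta_rank E (base_config \<B>) \<le> k \<longrightarrow>
           (\<forall>E' \<B>'. is_minor E \<B> E' \<B>' \<longrightarrow> theta_rank E' (base_config \<B>') \<le> k))
       \<and> (levelness E (base_config \<B>) \<le> k \<longrightarrow>
           (\<forall>E' \<B>'. is_minor E \<B> E' \<B>' \<longrightarrow> levelness E' (base_config \<B>') \<le> k))"
proof -
  have finE: "finite E" and sub: "\<forall>B\<in>\<B>. B \<subseteq> E" using assms unfolding matroid_def by auto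
  then have fin\<B>: "finite \<B>" by (meson Pow_iff finite_Pow_iff finite_subset subsetI)
  show ?thesis
  proof (intro conjI impI allI)
    fix E' \<B>' assume rank: "theta_rank E (base_config \<B>) \<le> k" and minor: "is_minor E \<B> E' \<B>'"
    have "theta_exact (theta_rank E (base_config \<B>)) E (base_config \<B>)"
      by (rule theta_exact_theta_rank[OF theta_exact_base_config[OF finE sub fin\<B>]])
    then have "theta_exact k E (base_config \<B>)" using rank by (rule theta_exact_mono)
    with minor finE fin\<B> have "theta_exact k E' (base_config \<B>')"
      using theta_exact_coord_slice by (rule is_minor_base_config_induct)
    then show "theta_rank E' (base_config \<B>') \<le> k" by (rule theta_rank_le)
  next
    fix E' \<B>' assume lev: "levelness E (base_config \<B>) \<le> k" and minor: "is_minor E \<B> E' \<B>'"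
    have "level_bounded (levelness E (base_config \<B>)) E (base_config \<B>)"
      by (rule level_bounded_levelness[OF finite_base_config[OF fin\<B>]])
    then have "level_bounded k E (base_config \<B>)" using lev by (rule level_bounded_mono)
    with minor finE fin\<B> have "level_bounded k E' (base_config \<B>')"
      using level_bounded_coord_slice by (rule is_minor_base_config_induct)
    then show "levelness E' (base_config \<B>') \<le> k" by (rule levelness_le)
  qed
qed
end
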